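(* Let $G=(V,E)$ be a finite simple undirected graph with distinct vertex IDs and let $K$ be a positive integer with $\delta(G)\ge K$. Run the procedure Efficient-VM on $G$ with parameter $K$. Then the virtual memory of each active vertex is increased by $K$: for every vertex $v$, in the round in which the color class of $v$ is active, none of the $K$ vertices selected by $v$ is active, and no active vertex other than $v$ selected any of them. Hence during that round the memories of these $K$ vertices are assigned solely to $v$.
   Context: $\Gamma(v)$ is the neighbor set of $v$, $\deg(v)=|\Gamma(v)|$, $\delta(G)=\min_v\deg(v)$. Operation $K$-Next-Modulo$(v,\Gamma(v),K)$: list $\Gamma(v)\cup\{v\}$ in ascending ID order as $u_1,\dots,u_d$ ($d=\deg(v)+1$) with $v=u_i$; $v$ selects $u_{i+1},\dots,u_{i+K}$, indices cyclic modulo $d$. Procedure Efficient-VM$(G,K)$ (synchronous distributed CONGEST model): (1) every vertex $v$ selects its $K$ neighbors by $K$-Next-Modulo (one round); let $G'=(V,E')$ where $E'$ consists of the edges $\{v,u\}$ such that $v$ selected $u$; (2) compute a 2-hop coloring of $G'$, i.e. a coloring in which any two distinct vertices at distance at most $2$ in $G'$ get different colors (by running Linial's coloring algorithm on $G'^2$); (3) process the color classes one per round in round-robin order; in the round of a color class, exactly the vertices of that class are active, and each active vertex $v$ distributes its backup data to the $K$ vertices it selected, using their memories. *)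

theory Defs
  imports Main
begin

text \<open>Vertices are their own (distinct) IDs, drawn from a linearly ordered type.
A finite simple undirected graph is a finite vertex set V with a set E of
2-element subsets of V.\<close>

definition simple_graph :: "'a set \<Rightarrow> 'a set set \<Rightarrow> bool" where
  "simple_graph V E \<longleftrightarrow> finite V \<and>
     (\<forall>e\<in>E. \<exists>u w. e = {u, w} \<and> u \<noteq> w \<and> u \<in> V \<and> w \<in> V)"

definition nbrs :: "'a set set \<Rightarrow> 'a \<Rightarrow> 'a set" where
  "nbrs E v = {u. {v, u} \<in> E}"

definition min_degree_ge :: "'a set \<Rightarrow> 'a set set \<Rightarrow> nat \<Rightarrow> bool" where
  "min_degree_ge V E K \<longleftrightarrow> (\<forall>v\<in>V. card (nbrs E v) \<ge> K)"

definition k_next_modulo :: "'a::linorder set set \<Rightarrow> nat \<Rightarrow> 'a \<Rightarrow> 'a set" where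
  "k_next_modulo E K v =
     (let L = sorted_list_of_set (insert v (nbrs E v));
          d = length L;
          i = (THE i. i < d \<and> L ! i = v)
      in (\<lambda>j. L ! ((i + j) mod d)) ` {1..K})"

definition selected_edges :: "'a::linorder set \<Rightarrow> 'a set set \<Rightarrow> nat \<Rightarrow> 'a set set" where
  "selected_edges V E K = {{v, u} | v u. v \<in> V \<and> u \<in> k_next_modulo E K v}"

definition two_hop_coloring :: "'a set \<Rightarrow> 'a set set \<Rightarrow> ('a \<Rightarrow> nat) \<Rightarrow> bool" where
  "two_hop_coloring V E' c \<longleftrightarrow>
     (\<forall>u\<in>V. \<forall>w\<in>V. u \<noteq> w \<and> ({u, w} \<in> E' \<or> (\<exists>x. {u, x} \<in> E' \<and> {x, w} \<in> E'))
        \<longrightarrow> c u \<noteq> c w)"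

end

theory Submission
  imports Defs "HOL-Number_Theory.Cong"
begin

text \<open>Since \<open>\<delta>(G) \<ge> K\<close>, the closed neighbourhood of \<open>v\<close> has more than \<open>K\<close> elements, so
the \<open>K\<close> cyclic successors of \<open>v\<close> in its sorted list are \<open>K\<close> distinct neighbours of \<open>v\<close>.
Each of them is adjacent to \<open>v\<close> in \<open>G'\<close>, and a second vertex \<open>w\<close> selecting one of them
would lie at distance two from \<open>v\<close> in \<open>G'\<close>; in both cases the 2-hop coloring separates
the colors.\<close>

lemma inj_on_add_mod: "inj_on (\<lambda>j. (i + j) mod d) {..<d :: nat}"
proof (rule inj_onI)
  fix j j' assume "j \<in> {..<d}" "j' \<in> {..<d}" "(i + j) mod d = (i + j') mod d"
  then show "j = j'"
    by (metis cong_def cong_add_lcancel_nat cong_less_modulus_unique_nat lessThan_iff)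
qed

lemma rotation_image:
  fixes L :: "'a list" and i K :: nat
  defines "rot \<equiv> \<lambda>j. L ! ((i + j) mod length L)"
  assumes "distinct L" "i < length L" "K < length L"
  shows "card (rot ` {1..K}) = K" "L ! i \<notin> rot ` {1..K}" "rot ` {1..K} \<subseteq> set L"
proof -
  have len: "0 < length L" using assms(3) by linarith
  then have "inj_on (nth L) ((\<lambda>j. (i + j) mod length L) ` {..<length L})"
    by (intro inj_on_nth) (auto simp: \<open>distinct L\<close>)
  then have inj: "inj_on rot {..<length L}"
    unfolding rot_def using comp_inj_on[OF inj_on_add_mod] by (simp add: comp_def)
  have sub: "{1..K} \<subseteq> {..<length L}" using assms(4) by auto
  show "card (rot ` {1..K}) = K"
    using card_image[OF inj_on_subset[OF inj sub]] by simp
  have "rot 0 \<notin> rot ` {1..K}"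
    using inj_on_image_mem_iff[OF inj _ sub, of 0] len by simp
  then show "L ! i \<notin> rot ` {1..K}" using assms(3) by (simp add: rot_def)
  show "rot ` {1..K} \<subseteq> set L" using len by (auto simp: rot_def)
qed

lemma k_next_modulo_selects_K_neighbours:
  fixes E :: "'a::linorder set set"
  assumes "finite (nbrs E v)" "v \<notin> nbrs E v" "K \<le> card (nbrs E v)"
  shows "card (k_next_modulo E K v) = K" "v \<notin> k_next_modulo E K v"
    "k_next_modulo E K v \<subseteq> nbrs E v"
proof -
  define L where "L = sorted_list_of_set (insert v (nbrs E v))"
  have "distinct L" and set_L: "set L = insert v (nbrs E v)"
    using assms(1) unfolding L_def by (simp_all del: sorted_list_of_set_insert_remove)
  then obtain i where i: "i < length L" "L ! i = v"
    by (metis in_set_conv_nth insertI1)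
  have "(THE i. i < length L \<and> L ! i = v) = i"
    using distinct_Ex1[OF \<open>distinct L\<close>, of v] i set_L by (intro the1_equality) simp_all
  then have k_next: "k_next_modulo E K v = (\<lambda>j. L ! ((i + j) mod length L)) ` {1..K}"
    unfolding k_next_modulo_def Let_def L_def by simp
  have "length L = card (insert v (nbrs E v))"
    using distinct_card[OF \<open>distinct L\<close>] set_L by simp
  also have "\<dots> = card (nbrs E v) + 1" using assms(1,2) by simp
  finally have "K < length L" using assms(3) by simp
  note rot = rotation_image[OF \<open>distinct L\<close> i(1) this, folded k_next, unfolded i(2) set_L]
  show "card (k_next_modulo E K v) = K" "v \<notin> k_next_modulo E K v"
    using rot(1,2) by auto
  show "k_next_modulo E K v \<subseteq> nbrs E v" using rot(2,3) by blast
qed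

lemma simple_graph_nbrs_subset: "simple_graph V E \<Longrightarrow> nbrs E v \<subseteq> V"
  by (fastforce simp: simple_graph_def nbrs_def doubleton_eq_iff)

lemma simple_graph_not_in_nbrs: "simple_graph V E \<Longrightarrow> v \<notin> nbrs E v"
  by (fastforce simp: simple_graph_def nbrs_def doubleton_eq_iff)

lemma selected_edgesI: "v \<in> V \<Longrightarrow> u \<in> k_next_modulo E K v \<Longrightarrow> {v, u} \<in> selected_edges V E K"
  unfolding selected_edges_def by blast

lemma two_hop_coloring_adjacent_neq:
  "two_hop_coloring V E' c \<Longrightarrow> u \<in> V \<Longrightarrow> w \<in> V \<Longrightarrow> u \<noteq> w \<Longrightarrow> {u, w} \<in> E' \<Longrightarrow> c u \<noteq> c w"
  unfolding two_hop_coloring_def by blast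

lemma two_hop_coloring_distance_two_neq:
  "two_hop_coloring V E' c \<Longrightarrow> u \<in> V \<Longrightarrow> w \<in> V \<Longrightarrow> u \<noteq> w \<Longrightarrow>
    {u, x} \<in> E' \<Longrightarrow> {x, w} \<in> E' \<Longrightarrow> c u \<noteq> c w"
  unfolding two_hop_coloring_def by blast

theorem lemma1:
  fixes V :: "'a::linorder set" and E :: "'a set set" and K :: nat and c :: "'a \<Rightarrow> nat"
  assumes "simple_graph V E"
    and "K > 0"
    and "min_degree_ge V E K"
    and "two_hop_coloring V (selected_edges V E K) c"
  shows "\<forall>v\<in>V. card (k_next_modulo E K v) = K \<and> v \<notin> k_next_modulo E K v \<and>
           (\<forall>u\<in>k_next_modulo E K v. c u \<noteq> c v \<and>
              (\<forall>w\<in>V. w \<noteq> v \<and> c w = c v \<longrightarrow> u \<notin> k_next_modulo E K w))"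
proof (intro ballI conjI impI)
  fix v assume v: "v \<in> V"
  have "finite V" using assms(1) by (simp add: simple_graph_def)
  then have fin: "finite (nbrs E v)"
    using simple_graph_nbrs_subset[OF assms(1)] by (rule finite_subset[rotated])
  have deg: "K \<le> card (nbrs E v)" using assms(3) v by (simp add: min_degree_ge_def)
  note selects =
    k_next_modulo_selects_K_neighbours[OF fin simple_graph_not_in_nbrs[OF assms(1)] deg]
  show "card (k_next_modulo E K v) = K" "v \<notin> k_next_modulo E K v" using selects(1,2) .
  fix u assume u: "u \<in> k_next_modulo E K v"
  have "u \<in> V" "v \<noteq> u" using u selects(2,3) simple_graph_nbrs_subset[OF assms(1)] by auto
  have vu: "{v, u} \<in> selected_edges V E K" using v u by (rule selected_edgesI)
  show "c u \<noteq> c v"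
    using two_hop_coloring_adjacent_neq[OF assms(4) v \<open>u \<in> V\<close> \<open>v \<noteq> u\<close> vu] by simp
  fix w assume w: "w \<in> V" "w \<noteq> v \<and> c w = c v"
  show "u \<notin> k_next_modulo E K w"
  proof
    assume "u \<in> k_next_modulo E K w"
    then have "{w, u} \<in> selected_edges V E K" using w(1) by (rule selected_edgesI[rotated])
    then have "{u, w} \<in> selected_edges V E K" by (simp only: insert_commute)
    then have "c v \<noteq> c w"
      using two_hop_coloring_distance_two_neq[OF assms(4) v w(1) _ vu] w(2) by blast
    then show False using w(2) by simp
  qed
qed

end
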